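(* Let $p$ be an odd prime and $C_p*C_p=\langle a,b : a^p,b^p\rangle$. If $\gamma\in C_p*C_p$ is nontrivial and is not a power of $b$, then the element $\gamma[b,\gamma]$ has infinite order.
   Context: Commutator convention: $[x,y]=x^{-1}y^{-1}xy$, so $\gamma[b,\gamma]=\gamma b^{-1}\gamma^{-1}b\gamma$. *)

theory Defs
  imports "HOL-Algebra.Algebra"
begin

text \<open>The free product C_p * C_p = < a, b | a^p, b^p >, realised by reduced words.
A word is a list of syllables (l, k): letter l (False = a, True = b) with exponent
k in {1..p-1}; consecutive syllables use different letters.\<close>

definition cp_reduced :: "nat \<Rightarrow> (bool \<times> nat) list \<Rightarrow> bool" where
  "cp_reduced p xs \<longleftrightarrow>
     (\<forall>s\<in>set xs. 0 < snd s \<and> snd s < p) \<and>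
     (\<forall>i. Suc i < length xs \<longrightarrow> fst (xs ! i) \<noteq> fst (xs ! Suc i))"

definition cp_push :: "nat \<Rightarrow> (bool \<times> nat) list \<Rightarrow> bool \<times> nat \<Rightarrow> (bool \<times> nat) list" where
  "cp_push p xs s =
     (if xs = [] then [s]
      else if fst (last xs) = fst s then
        (let m = (snd (last xs) + snd s) mod p in
          if m = 0 then butlast xs else butlast xs @ [(fst s, m)])
      else xs @ [s])"

definition cp_mult :: "nat \<Rightarrow> (bool \<times> nat) list \<Rightarrow> (bool \<times> nat) list \<Rightarrow> (bool \<times> nat) list" where
  "cp_mult p xs ys = foldl (cp_push p) xs ys"

definition CpCp :: "nat \<Rightarrow> (bool \<times> nat) list monoid" where
  "CpCp p = \<lparr>carrier = {xs. cp_reduced p xs}, monoid.mult = cp_mult p, one = []\<rparr>"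

definition cp_a :: "(bool \<times> nat) list" where "cp_a = [(False, 1)]"
definition cp_b :: "(bool \<times> nat) list" where "cp_b = [(True, 1)]"

definition commutator :: "('a, 'b) monoid_scheme \<Rightarrow> 'a \<Rightarrow> 'a \<Rightarrow> 'a" where
  "commutator G x y = inv\<^bsub>G\<^esub> x \<otimes>\<^bsub>G\<^esub> inv\<^bsub>G\<^esub> y \<otimes>\<^bsub>G\<^esub> x \<otimes>\<^bsub>G\<^esub> y"

end

theory Submission
  imports Defs
begin

(* Since b^e,
      b^f commute with b, \<gamma>[b,\<gamma>] is conjugate to the word
          L = w b\<inverse> w\<inverse> b w b^c,   c = e + f mod p,
      which is reduced as written.  L cannot have the shape u s u\<inverse>: for c \<noteq> 0 its first and
      last letters differ, and for c = 0 comparing prefixes would force w = w\<inverse>, which is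
      impossible for a nonempty reduced word when p is odd. *)

definition syllable :: "nat \<Rightarrow> bool \<times> nat \<Rightarrow> bool" where
  "syllable p s \<longleftrightarrow> 0 < snd s \<and> snd s < p"

lemma reduced_iff:
  "cp_reduced p xs \<longleftrightarrow> (\<forall>s\<in>set xs. syllable p s) \<and> successively (\<lambda>x y. fst x \<noteq> fst y) xs"
  unfolding cp_reduced_def syllable_def successively_conv_nth by blast

lemma reduced_Nil [simp]: "cp_reduced p []"
  by (simp add: reduced_iff)

lemma reduced_single [simp]: "cp_reduced p [s] \<longleftrightarrow> syllable p s"
  by (simp add: reduced_iff)

lemma reduced_append:
  "cp_reduced p (xs @ ys) \<longleftrightarrow> cp_reduced p xs \<and> cp_reduced p ys \<and>
     (xs = [] \<or> ys = [] \<or> fst (last xs) \<noteq> fst (hd ys))"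
  unfolding reduced_iff successively_append_iff by auto

lemma reduced_Cons:
  "cp_reduced p (x # xs) \<longleftrightarrow> syllable p x \<and> cp_reduced p xs \<and> (xs = [] \<or> fst x \<noteq> fst (hd xs))"
  using reduced_append[of p "[x]" xs] by simp

lemma reduced_syllables: "cp_reduced p r \<Longrightarrow> \<forall>s\<in>set r. syllable p s"
  by (simp add: reduced_iff)

lemma push_snoc:
  "cp_push p (ys @ [t]) s =
     (if fst t = fst s
      then (let m = (snd t + snd s) mod p in if m = 0 then ys else ys @ [(fst s, m)])
      else ys @ [t, s])"
  by (simp add: cp_push_def Let_def)

lemma push_reduced:
  assumes "1 < p" "cp_reduced p xs" "syllable p s"
  shows "cp_reduced p (cp_push p xs s)"
proof (cases xs rule: rev_exhaust)
  case Nil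
  then show ?thesis using assms by (simp add: cp_push_def)
next
  case (snoc ys t)
  then have ys: "cp_reduced p ys" "ys = [] \<or> fst (last ys) \<noteq> fst t"
    using assms(2) by (auto simp: reduced_append)
  show ?thesis
    using ys assms snoc by (auto simp: push_snoc Let_def reduced_append reduced_Cons syllable_def)
qed

lemma foldl_push_reduced:
  "cp_reduced p x \<Longrightarrow> 1 < p \<Longrightarrow> \<forall>s\<in>set r. syllable p s \<Longrightarrow> cp_reduced p (foldl (cp_push p) x r)"
  by (induction r arbitrary: x) (simp_all add: push_reduced)

lemma exponents_cancel:
  fixes a b p :: nat
  assumes "(a + b) mod p = 0" "0 < a" "a < p" "b < p"
  shows "a + b = p"
proof -
  obtain q where q: "a + b = p * q" using assms(1) by (auto simp: mod_eq_0_iff_dvd)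
  have "p * q < p * 2" using q assms(3,4) by linarith
  moreover have "q \<noteq> 0" using q assms(2) by (cases q) auto
  ultimately have "q = 1" by simp
  with q show ?thesis by simp
qed

lemma push_after_other_letter:
  assumes "cp_reduced p (ys @ [(l, k)])"
  shows "cp_push p ys (l, j) = ys @ [(l, j)]"
  using assms by (cases "ys = []") (auto simp: cp_push_def reduced_append)

text \<open>Pushing two syllables of the same letter equals pushing their reduced sum: the local
  form of associativity.\<close>
lemma push_push:
  assumes y: "cp_reduced p y" and ij: "0 < i" "i < p" "0 < j" "j < p"
  shows "cp_push p (cp_push p y (l, i)) (l, j) =
         (if (i + j) mod p = 0 then y else cp_push p y (l, (i + j) mod p))"
proof (cases y rule: rev_exhaust)
  case Nil
  then show ?thesis by (simp add: cp_push_def Let_def)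
next
  case (snoc ys t)
  obtain l' k where t: "t = (l', k)" by force
  have k: "0 < k" "k < p" using y snoc t by (auto simp: reduced_append syllable_def)
  show ?thesis
  proof (cases "l' = l")
    case False
    then have "cp_push p y (l, i) = (ys @ [t]) @ [(l, i)]" using snoc t by (simp add: push_snoc)
    then show ?thesis using snoc t False push_snoc[of p "ys @ [t]" "(l, i)" "(l, j)"]
      by (simp add: Let_def cp_push_def)
  next
    case True
    have sum3: "((k + i) mod p + j) mod p = (k + (i + j)) mod p"
               "(k + (i + j) mod p) mod p = (k + (i + j)) mod p"
      by (simp_all add: mod_add_left_eq mod_add_right_eq add.assoc)
    have other: "cp_push p ys (l, j) = ys @ [(l, j)]"
      using push_after_other_letter y snoc t True by blast
    consider "(k + i) mod p = 0" "(i + j) mod p = 0" | "(k + i) mod p = 0" "(i + j) mod p \<noteq> 0"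
      | "(k + i) mod p \<noteq> 0" by blast
    then show ?thesis
    proof cases
      case 1
      then have "k + i = p" "i + j = p"
        using exponents_cancel[of k i p] exponents_cancel[of i j p] k ij by auto
      then show ?thesis using 1 other snoc t True by (simp add: push_snoc)
    next
      case 2
      then have "k + i = p" using exponents_cancel[of k i p] k ij by auto
      then have "(k + (i + j) mod p) mod p = j" using sum3 ij
        by (metis add.assoc mod_add_self1 mod_less)
      then show ?thesis using 2 other snoc t True ij by (simp add: push_snoc Let_def)
    next
      case 3
      then have "cp_push p y (l, i) = ys @ [(l, (k + i) mod p)]"
        using snoc t True by (simp add: push_snoc Let_def)
      moreover have "(k + (i + j)) mod p = k" if "(i + j) mod p = 0"
        using exponents_cancel[of i j p] that ij k by simp
      ultimately show ?thesis using snoc t True sum3 k by (auto simp: push_snoc Let_def)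
    qed
  qed
qed

text \<open>Multiplying x by a word commutes with pushing a final syllable onto that word; by
  induction this gives associativity.\<close>
lemma foldl_push_last:
  assumes p: "1 < p" and x: "cp_reduced p x" and r: "cp_reduced p r" and s: "syllable p s"
  shows "foldl (cp_push p) x (cp_push p r s) = cp_push p (foldl (cp_push p) x r) s"
proof (cases r rule: rev_exhaust)
  case Nil
  then show ?thesis by (simp add: cp_push_def)
next
  case (snoc r' t)
  obtain l' k where t: "t = (l', k)" by force
  obtain l j where sj: "s = (l, j)" by force
  show ?thesis
  proof (cases "l' = l")
    case False
    then show ?thesis using snoc t sj by (simp add: cp_push_def)
  next
    case True
    have r': "cp_reduced p r'" and k: "0 < k" "k < p"
      using r snoc t by (auto simp: reduced_append syllable_def)
    have "cp_reduced p (foldl (cp_push p) x r')"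
      using foldl_push_reduced[OF x p] r' reduced_syllables by blast
    from push_push[OF this k, of j l] s sj
    show ?thesis using snoc t sj True by (simp add: push_snoc Let_def syllable_def)
  qed
qed

lemma foldl_foldl_push:
  assumes p: "1 < p" and x: "cp_reduced p x" and y: "cp_reduced p y"
  shows "\<forall>s\<in>set z. syllable p s \<Longrightarrow>
           foldl (cp_push p) x (foldl (cp_push p) y z) = foldl (cp_push p) x (y @ z)"
proof (induction z rule: rev_induct)
  case Nil
  then show ?case by simp
next
  case (snoc s z)
  have "cp_reduced p (foldl (cp_push p) y z)" using foldl_push_reduced[OF y p] snoc by simp
  then show ?case using foldl_push_last[OF p x] snoc by simp
qed

lemma mult_assoc:
  assumes "1 < p" "cp_reduced p x" "cp_reduced p y" "cp_reduced p z"
  shows "cp_mult p (cp_mult p x y) z = cp_mult p x (cp_mult p y z)"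
  unfolding cp_mult_def using foldl_foldl_push[OF assms(1-3)] reduced_syllables[OF assms(4)] by simp

lemma mult_concat: "cp_reduced p (x @ y) \<Longrightarrow> cp_mult p x y = x @ y"
proof (induction y rule: rev_induct)
  case Nil
  then show ?case by (simp add: cp_mult_def)
next
  case (snoc s y)
  then have "cp_reduced p (x @ y)" "x @ y = [] \<or> fst (last (x @ y)) \<noteq> fst s"
    using reduced_append[of p "x @ y" "[s]"] by simp_all
  then show ?case using snoc.IH by (auto simp: cp_mult_def cp_push_def)
qed

definition inv_syllable :: "nat \<Rightarrow> bool \<times> nat \<Rightarrow> bool \<times> nat" where
  "inv_syllable p s = (fst s, p - snd s)"

definition inv_word :: "nat \<Rightarrow> (bool \<times> nat) list \<Rightarrow> (bool \<times> nat) list" where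
  "inv_word p xs = rev (map (inv_syllable p) xs)"

lemma inv_word_simps [simp]:
  "inv_word p [] = []" "inv_word p (x # xs) = inv_word p xs @ [inv_syllable p x]"
  "inv_word p (xs @ ys) = inv_word p ys @ inv_word p xs"
  by (simp_all add: inv_word_def)

lemma inv_word_eq_Nil_iff [simp]: "inv_word p xs = [] \<longleftrightarrow> xs = []"
  by (simp add: inv_word_def)

lemma inv_word_reduced: "cp_reduced p xs \<Longrightarrow> cp_reduced p (inv_word p xs)"
  unfolding reduced_iff inv_word_def successively_rev successively_map
  by (auto simp: inv_syllable_def syllable_def elim: successively_mono)

lemma inv_word_inv_word: "cp_reduced p xs \<Longrightarrow> inv_word p (inv_word p xs) = xs"
  unfolding inv_word_def rev_map[symmetric] rev_rev_ident map_map reduced_iff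
  by (rule map_idI) (auto simp: inv_syllable_def syllable_def)

lemma mult_inv_word: "cp_reduced p w \<Longrightarrow> cp_mult p w (inv_word p w) = []"
proof (induction w rule: rev_induct)
  case Nil
  then show ?case by (simp add: cp_mult_def)
next
  case (snoc t w)
  then have w: "cp_reduced p w" and t: "syllable p t" by (auto simp: reduced_append)
  then have "cp_push p (w @ [t]) (inv_syllable p t) = w"
    by (simp add: push_snoc inv_syllable_def syllable_def Let_def)
  then show ?case using snoc.IH[OF w] by (simp add: cp_mult_def)
qed

lemma CpCp_simps [simp]:
  "x \<in> carrier (CpCp p) \<longleftrightarrow> cp_reduced p x"
  "x \<otimes>\<^bsub>CpCp p\<^esub> y = cp_mult p x y"
  "\<one>\<^bsub>CpCp p\<^esub> = []"
  by (simp_all add: CpCp_def)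

lemma CpCp_group:
  assumes "1 < p" shows "group (CpCp p)"
proof (rule groupI)
  fix x y
  assume "x \<in> carrier (CpCp p)" "y \<in> carrier (CpCp p)"
  then show "x \<otimes>\<^bsub>CpCp p\<^esub> y \<in> carrier (CpCp p)"
    using foldl_push_reduced assms reduced_syllables by (auto simp: cp_mult_def)
next
  fix x y z
  assume "x \<in> carrier (CpCp p)" "y \<in> carrier (CpCp p)" "z \<in> carrier (CpCp p)"
  then show "x \<otimes>\<^bsub>CpCp p\<^esub> y \<otimes>\<^bsub>CpCp p\<^esub> z = x \<otimes>\<^bsub>CpCp p\<^esub> (y \<otimes>\<^bsub>CpCp p\<^esub> z)"
    using mult_assoc[OF assms] by simp
next
  show "\<one>\<^bsub>CpCp p\<^esub> \<in> carrier (CpCp p)" by simp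
next
  fix x
  assume "x \<in> carrier (CpCp p)"
  then show "\<one>\<^bsub>CpCp p\<^esub> \<otimes>\<^bsub>CpCp p\<^esub> x = x" using mult_concat[of p "[]" x] by simp
next
  fix x
  assume "x \<in> carrier (CpCp p)"
  then have x: "cp_reduced p x" by simp
  show "\<exists>y\<in>carrier (CpCp p). y \<otimes>\<^bsub>CpCp p\<^esub> x = \<one>\<^bsub>CpCp p\<^esub>"
    using mult_inv_word[OF inv_word_reduced[OF x]] inv_word_inv_word[OF x] inv_word_reduced[OF x]
    by (intro bexI[of _ "inv_word p x"]) simp_all
qed

lemma CpCp_inv:
  assumes "1 < p" "cp_reduced p x" shows "inv\<^bsub>CpCp p\<^esub> x = inv_word p x"
proof -
  interpret group "CpCp p" using CpCp_group[OF assms(1)] .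
  show ?thesis
    using inv_equality[of "inv_word p x" x] mult_inv_word[OF inv_word_reduced[OF assms(2)]]
      inv_word_inv_word[OF assms(2)] inv_word_reduced[OF assms(2)] assms(2) by simp
qed

lemma (in group) inv_cancel_left [simp]:
  assumes "x \<in> carrier G" "y \<in> carrier G"
  shows "x \<otimes> (inv x \<otimes> y) = y" "inv x \<otimes> (x \<otimes> y) = y"
  using assms by (simp_all add: m_assoc[symmetric])

lemma (in group) conj_pow:
  assumes c: "c \<in> carrier G" and x: "x \<in> carrier G"
  shows "(c \<otimes> x \<otimes> inv c) [^] (n::nat) = c \<otimes> x [^] n \<otimes> inv c"
  by (induction n) (use c x in \<open>simp_all add: m_assoc nat_pow_Suc2\<close>)

lemma (in group) conj_pow_eq_one_iff:
  assumes c: "c \<in> carrier G" and x: "x \<in> carrier G"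
  shows "(c \<otimes> x \<otimes> inv c) [^] (n::nat) = \<one> \<longleftrightarrow> x [^] n = \<one>"
proof -
  have "c \<otimes> y \<otimes> inv c = \<one> \<longleftrightarrow> y = \<one>" if y: "y \<in> carrier G" for y
  proof
    assume "c \<otimes> y \<otimes> inv c = \<one>"
    then have "inv c \<otimes> (c \<otimes> y \<otimes> inv c) \<otimes> c = \<one>" using c by simp
    then show "y = \<one>" using c y by (simp add: m_assoc)
  qed (use c in simp)
  then show ?thesis using conj_pow[OF c x] x by simp
qed

text \<open>A reduced word whose first and last letters differ (cyclically reduced) is raised to a
  power by plain repetition, so it has infinite order.\<close>
lemma cyclically_reduced_pow:
  assumes p: "1 < p" and h: "cp_reduced p h" "h \<noteq> []" "fst (hd h) \<noteq> fst (last h)"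
  shows "h [^]\<^bsub>CpCp p\<^esub> (n::nat) = concat (replicate n h) \<and> cp_reduced p (concat (replicate n h))"
proof (induction n)
  case 0
  then show ?case by simp
next
  case (Suc n)
  interpret group "CpCp p" using CpCp_group[OF p] .
  have "n > 0 \<Longrightarrow> hd (concat (replicate n h)) = hd h" using h(2) by (cases n) auto
  then have r: "cp_reduced p (h @ concat (replicate n h))" using Suc h
    by (cases "n = 0") (auto simp: reduced_append)
  have "h [^]\<^bsub>CpCp p\<^esub> Suc n = cp_mult p h (h [^]\<^bsub>CpCp p\<^esub> n)"
    using nat_pow_Suc2[of h n] h by simp
  then show ?case using Suc mult_concat[OF r] r by simp
qed

lemma cyclically_reduced_infinite_order:
  assumes "1 < p" "cp_reduced p h" "h \<noteq> []" "fst (hd h) \<noteq> fst (last h)" "0 < n"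
  shows "h [^]\<^bsub>CpCp p\<^esub> (n::nat) \<noteq> []"
  using cyclically_reduced_pow[OF assms(1-4), of n] assms(3,5) by (cases n) auto

lemma torsion_word_outer_letters:
  assumes p: "1 < p" and n: "0 < n" and h: "cp_reduced p h" "h [^]\<^bsub>CpCp p\<^esub> (n::nat) = []"
    and long: "1 < length h"
  obtains l k1 m k2 where "h = (l, k1) # m @ [(l, k2)]"
proof -
  obtain s1 t where "h = s1 # t" "t \<noteq> []" using long by (cases h) auto
  then obtain m s2 where hm: "h = s1 # m @ [s2]" by (metis rev_exhaust)
  then have "fst s1 = fst s2"
    using cyclically_reduced_infinite_order[OF p h(1) _ _ n] h(2) by auto
  with hm that show ?thesis by (cases s1, cases s2) auto
qed

lemma cyclic_reduction_step:
  assumes p: "1 < p" and h: "cp_reduced p ((l, k1) # m @ [(l, k2)])"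
  defines "m' \<equiv> (if (k2 + k1) mod p = 0 then m else m @ [(l, (k2 + k1) mod p)])"
  shows "cp_reduced p m'"
    and "((l, k1) # m @ [(l, k2)]) [^]\<^bsub>CpCp p\<^esub> (n::nat) = [] \<Longrightarrow> m' [^]\<^bsub>CpCp p\<^esub> n = []"
proof -
  interpret group "CpCp p" using CpCp_group[OF p] .
  let ?h = "(l, k1) # m @ [(l, k2)]" and ?c = "[(l, k1)]"
  have c: "cp_reduced p ?c" using h by (simp add: reduced_Cons)
  have hc: "?h \<otimes>\<^bsub>CpCp p\<^esub> ?c = (l, k1) # m'"
    using push_snoc[of p "(l, k1) # m" "(l, k2)" "(l, k1)"]
    by (simp add: cp_mult_def Let_def m'_def)
  have "cp_reduced p ((l, k1) # m')" using hc m_closed[of ?h ?c] h c by simp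
  then have "?c \<otimes>\<^bsub>CpCp p\<^esub> m' = ?h \<otimes>\<^bsub>CpCp p\<^esub> ?c" and m': "cp_reduced p m'"
    using mult_concat[of p ?c m'] hc by (simp_all add: reduced_Cons)
  then have "m' = inv\<^bsub>CpCp p\<^esub> ?c \<otimes>\<^bsub>CpCp p\<^esub> (?h \<otimes>\<^bsub>CpCp p\<^esub> ?c)"
    using inv_solve_left[of m' ?c "?h \<otimes>\<^bsub>CpCp p\<^esub> ?c"] h c m_closed[of ?h ?c] by simp
  then have conj: "m' = inv\<^bsub>CpCp p\<^esub> ?c \<otimes>\<^bsub>CpCp p\<^esub> ?h \<otimes>\<^bsub>CpCp p\<^esub> inv\<^bsub>CpCp p\<^esub> (inv\<^bsub>CpCp p\<^esub> ?c)"
    using m_assoc[of "inv\<^bsub>CpCp p\<^esub> ?c" ?h ?c] inv_closed[of ?c] h c by simp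
  show "cp_reduced p m'" by (fact m')
  show "?h [^]\<^bsub>CpCp p\<^esub> n = [] \<Longrightarrow> m' [^]\<^bsub>CpCp p\<^esub> n = []"
    using conj_pow_eq_one_iff[of "inv\<^bsub>CpCp p\<^esub> ?c" ?h n] conj inv_closed[of ?c] h c by simp
qed

text \<open>Induction on the length: the outer syllables of a torsion
  word share a letter and are merged by conjugation; if they cancel, induction applies to the
  inner part, and otherwise the merged word is cyclically reduced, a contradiction.\<close>
lemma torsion_word_symmetric:
  assumes p: "1 < p" and n: "0 < n"
  shows "cp_reduced p h \<Longrightarrow> h \<noteq> [] \<Longrightarrow> h [^]\<^bsub>CpCp p\<^esub> (n::nat) = [] \<Longrightarrow>
           \<exists>u s. h = u @ [s] @ inv_word p u"
proof (induction "length h" arbitrary: h rule: less_induct)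
  case less
  show ?case
  proof (cases "length h = 1")
    case True
    then obtain s where "h = [s]" by (cases h) auto
    then show ?thesis by (intro exI[of _ "[]"]) auto
  next
    case False
    then have "1 < length h" using less.prems(2) by (cases h) auto
    then obtain l k1 m k2 where h: "h = (l, k1) # m @ [(l, k2)]"
      using torsion_word_outer_letters[OF p n less.prems(1,3)] by blast
    have "m \<noteq> []" using less.prems(1) h by (auto simp: reduced_Cons)
    with less.prems(1) have m: "cp_reduced p m" "fst (hd m) \<noteq> l" and k: "0 < k1" "k1 < p" "k2 < p"
      unfolding h by (auto simp: reduced_Cons reduced_append syllable_def)
    define m' where "m' = (if (k2 + k1) mod p = 0 then m else m @ [(l, (k2 + k1) mod p)])"
    have m': "cp_reduced p m'" "m' [^]\<^bsub>CpCp p\<^esub> n = []"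
      using cyclic_reduction_step[OF p less.prems(1)[unfolded h]] less.prems(3)
      unfolding h m'_def by auto
    show ?thesis
    proof (cases "(k2 + k1) mod p = 0")
      case True
      then have "(l, k2) = inv_syllable p (l, k1)"
        using exponents_cancel[of k1 k2 p] k by (simp add: inv_syllable_def add.commute)
      moreover obtain u s where "m = u @ [s] @ inv_word p u"
        using less.hyps[of m] m' True \<open>m \<noteq> []\<close> h unfolding m'_def by auto
      ultimately show ?thesis using h by (intro exI[of _ "(l, k1) # u"] exI[of _ s]) simp
    next
      case False
      then have "m' [^]\<^bsub>CpCp p\<^esub> n \<noteq> []"
        using cyclically_reduced_infinite_order[OF p m'(1) _ _ n] \<open>m \<noteq> []\<close> m
        unfolding m'_def by (simp add: hd_append)
      then show ?thesis using m' by simp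
    qed
  qed
qed

definition b_word :: "nat \<Rightarrow> (bool \<times> nat) list" where
  "b_word k = (if k = 0 then [] else [(True, k)])"

lemma b_pow_less:
  assumes p: "1 < p" shows "k < p \<Longrightarrow> cp_b [^]\<^bsub>CpCp p\<^esub> k = b_word k"
proof (induction k)
  case 0
  then show ?case by (simp add: b_word_def)
next
  case (Suc k)
  then show ?case by (cases "k = 0") (simp_all add: b_word_def cp_b_def cp_mult_def cp_push_def)
qed

lemma b_pow:
  assumes p: "1 < p" shows "cp_b [^]\<^bsub>CpCp p\<^esub> k = b_word (k mod p)"
proof -
  interpret group "CpCp p" using CpCp_group[OF p] .
  have b: "cp_b \<in> carrier (CpCp p)" using p by (simp add: cp_b_def syllable_def)
  have "cp_b [^]\<^bsub>CpCp p\<^esub> p = cp_b \<otimes>\<^bsub>CpCp p\<^esub> cp_b [^]\<^bsub>CpCp p\<^esub> (p - 1)"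
    using nat_pow_Suc2[OF b, of "p - 1"] p by simp
  then have order_b: "cp_b [^]\<^bsub>CpCp p\<^esub> p = []"
    using b_pow_less[OF p, of "p - 1"] p by (simp add: b_word_def cp_b_def cp_mult_def cp_push_def)
  have "cp_b [^]\<^bsub>CpCp p\<^esub> k
        = (cp_b [^]\<^bsub>CpCp p\<^esub> p) [^]\<^bsub>CpCp p\<^esub> (k div p) \<otimes>\<^bsub>CpCp p\<^esub> cp_b [^]\<^bsub>CpCp p\<^esub> (k mod p)"
    using nat_pow_mult[OF b] nat_pow_pow[OF b] mult_div_mod_eq[of p k] by metis
  also have "\<dots> = b_word (k mod p)"
    using order_b b_pow_less[OF p, of "k mod p"] p nat_pow_closed[OF b, of "k mod p"]
      nat_pow_one[of "k div p"] l_one[of "b_word (k mod p)"] by simp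
  finally show ?thesis .
qed

lemma strip_leading_b:
  assumes r: "cp_reduced p g" and ne: "g \<noteq> []" and not_b: "\<forall>k. g \<noteq> [(True, k)]"
  shows "\<exists>e g'. g = b_word e @ g' \<and> e < p \<and> g' \<noteq> [] \<and> \<not> fst (hd g') \<and> cp_reduced p g'"
proof -
  obtain s rest where g: "g = s # rest" using ne by (cases g) auto
  have "0 < p" using r g by (auto simp: reduced_Cons syllable_def)
  show ?thesis
  proof (cases "fst s")
    case True
    then have s: "s = (True, snd s)" "0 < snd s" "snd s < p" using r g
      by (auto simp: reduced_Cons syllable_def prod_eq_iff)
    then have "rest \<noteq> []" using not_b g by auto
    then show ?thesis using r g s True
      by (intro exI[of _ "snd s"] exI[of _ rest]) (auto simp: b_word_def reduced_Cons)
  next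
    case False
    then show ?thesis using r g \<open>0 < p\<close> by (intro exI[of _ 0] exI[of _ g]) (auto simp: b_word_def)
  qed
qed

lemma strip_trailing_b:
  assumes r: "cp_reduced p g" and ne: "g \<noteq> []" and h: "\<not> fst (hd g)"
  shows "\<exists>f w. g = w @ b_word f \<and> f < p \<and> w \<noteq> [] \<and> \<not> fst (hd w) \<and> \<not> fst (last w) \<and>
                cp_reduced p w"
proof -
  obtain ys t where g: "g = ys @ [t]" using ne by (cases g rule: rev_exhaust) auto
  have "0 < p" using r g by (auto simp: reduced_append syllable_def)
  show ?thesis
  proof (cases "fst t")
    case True
    then have t: "t = (True, snd t)" "0 < snd t" "snd t < p" using r g
      by (auto simp: reduced_append syllable_def prod_eq_iff)
    have "ys \<noteq> []" using h g True by auto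
    moreover from this have "\<not> fst (last ys)" using r g True by (auto simp: reduced_append)
    ultimately show ?thesis using r g t h
      by (intro exI[of _ "snd t"] exI[of _ ys]) (auto simp: b_word_def reduced_append)
  next
    case False
    then show ?thesis using r g h \<open>0 < p\<close> by (intro exI[of _ 0] exI[of _ g]) (auto simp: b_word_def)
  qed
qed

lemma a_core_decomposition:
  assumes p: "1 < p" and \<gamma>: "cp_reduced p \<gamma>" "\<gamma> \<noteq> []"
    and not_b_pow: "\<not> (\<exists>n::int. \<gamma> = cp_b [^]\<^bsub>CpCp p\<^esub> n)"
  obtains e w f where "\<gamma> = b_word e @ w @ b_word f" "e < p" "f < p"
    "cp_reduced p w" "w \<noteq> []" "\<not> fst (hd w)" "\<not> fst (last w)"
proof -
  interpret group "CpCp p" using CpCp_group[OF p] .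
  have "\<gamma> \<noteq> [(True, k)]" for k
  proof
    assume \<gamma>_k: "\<gamma> = [(True, k)]"
    then have "0 < k" "k < p" using \<gamma>(1) by (auto simp: syllable_def)
    then have "\<gamma> = cp_b [^]\<^bsub>CpCp p\<^esub> (int k)"
      using \<gamma>_k b_pow_less[OF p, of k] by (simp add: b_word_def int_pow_int)
    then show False using not_b_pow by blast
  qed
  then obtain e g' where "\<gamma> = b_word e @ g'" "e < p" "g' \<noteq> []" "\<not> fst (hd g')" "cp_reduced p g'"
    using strip_leading_b[OF \<gamma>] by blast
  with strip_trailing_b[of p g'] that show ?thesis by auto
qed

lemma (in group) commutator_conj_form:
  assumes carr: "b \<in> carrier G" "w \<in> carrier G" "P \<in> carrier G" "Q \<in> carrier G"
    and comm: "b \<otimes> P = P \<otimes> b" "b \<otimes> Q = Q \<otimes> b"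
  shows "(P \<otimes> w \<otimes> Q) \<otimes> commutator G b (P \<otimes> w \<otimes> Q)
         = P \<otimes> (w \<otimes> inv b \<otimes> inv w \<otimes> b \<otimes> w \<otimes> (Q \<otimes> P)) \<otimes> inv P"
proof -
  have Q_inv_b: "Q \<otimes> (inv b \<otimes> z) = inv b \<otimes> (Q \<otimes> z)" if "z \<in> carrier G" for z
  proof -
    have "Q \<otimes> inv b = inv b \<otimes> Q"
      using comm(2) carr by (metis inv_solve_left inv_solve_right m_assoc m_closed inv_closed)
    then show ?thesis using carr that by (simp add: m_assoc[symmetric])
  qed
  have inv_P_b: "inv P \<otimes> (b \<otimes> z) = b \<otimes> (inv P \<otimes> z)" if "z \<in> carrier G" for z
  proof -
    have "inv P \<otimes> b = b \<otimes> inv P"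
      using comm(1) carr by (metis inv_solve_left inv_solve_right m_assoc m_closed inv_closed)
    then show ?thesis using carr that by (simp add: m_assoc[symmetric])
  qed
  have "(P \<otimes> w \<otimes> Q) \<otimes> commutator G b (P \<otimes> w \<otimes> Q)
      = P \<otimes> (w \<otimes> (Q \<otimes> (inv b \<otimes> (inv Q \<otimes> (inv w \<otimes> (inv P \<otimes> (b \<otimes> (P \<otimes> (w \<otimes> Q)))))))))"
    using carr by (simp add: commutator_def m_assoc inv_mult_group)
  also have "\<dots> = P \<otimes> (w \<otimes> (inv b \<otimes> (inv w \<otimes> (b \<otimes> (w \<otimes> Q)))))"
    using carr by (simp add: Q_inv_b inv_P_b)
  also have "\<dots> = P \<otimes> (w \<otimes> inv b \<otimes> inv w \<otimes> b \<otimes> w \<otimes> (Q \<otimes> P)) \<otimes> inv P"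
    using carr by (simp add: m_assoc)
  finally show ?thesis .
qed

definition core_word :: "nat \<Rightarrow> (bool \<times> nat) list \<Rightarrow> nat \<Rightarrow> (bool \<times> nat) list" where
  "core_word p w c = w @ [(True, p - 1)] @ inv_word p w @ [(True, 1)] @ w @ b_word c"

lemma inv_word_ends:
  assumes "w \<noteq> []"
  shows "hd (inv_word p w) = inv_syllable p (last w)" "last (inv_word p w) = inv_syllable p (hd w)"
  using assms by (simp_all add: inv_word_def hd_rev last_rev hd_map last_map)

lemma core_word_product:
  assumes p: "1 < p" and w: "cp_reduced p w" "w \<noteq> []" "\<not> fst (hd w)" "\<not> fst (last w)"
    and c: "c < p"
  shows "cp_reduced p (core_word p w c)"
    and "w \<otimes>\<^bsub>CpCp p\<^esub> inv\<^bsub>CpCp p\<^esub> cp_b \<otimes>\<^bsub>CpCp p\<^esub> inv\<^bsub>CpCp p\<^esub> w \<otimes>\<^bsub>CpCp p\<^esub> cp_b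
           \<otimes>\<^bsub>CpCp p\<^esub> w \<otimes>\<^bsub>CpCp p\<^esub> b_word c = core_word p w c"
proof -
  have W: "cp_reduced p (inv_word p w)" "inv_word p w \<noteq> []"
          "\<not> fst (hd (inv_word p w))" "\<not> fst (last (inv_word p w))"
    using inv_word_reduced[OF w(1)] inv_word_ends[OF w(2), of p] w(2-4)
    by (auto simp: inv_syllable_def inv_word_def)
  have inv_b: "inv\<^bsub>CpCp p\<^esub> cp_b = [(True, p - 1)]"
    using CpCp_inv[OF p, of cp_b] p by (simp add: cp_b_def inv_syllable_def syllable_def)
  show "cp_reduced p (core_word p w c)"
    unfolding core_word_def using w W p c
    by (auto simp: reduced_append reduced_Cons syllable_def b_word_def hd_append)
  then show "w \<otimes>\<^bsub>CpCp p\<^esub> inv\<^bsub>CpCp p\<^esub> cp_b \<otimes>\<^bsub>CpCp p\<^esub> inv\<^bsub>CpCp p\<^esub> w \<otimes>\<^bsub>CpCp p\<^esub> cp_b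
           \<otimes>\<^bsub>CpCp p\<^esub> w \<otimes>\<^bsub>CpCp p\<^esub> b_word c = core_word p w c"
    unfolding core_word_def inv_b CpCp_inv[OF p w(1)] using w W p c
    by (simp add: mult_concat cp_b_def reduced_append reduced_Cons syllable_def b_word_def
        hd_append)
qed

lemma commutator_conj_core_word:
  assumes p: "1 < p" and \<gamma>: "\<gamma> = b_word e @ w @ b_word f" "cp_reduced p \<gamma>" "e < p" "f < p"
    and w: "cp_reduced p w" "w \<noteq> []" "\<not> fst (hd w)" "\<not> fst (last w)"
  shows "\<gamma> \<otimes>\<^bsub>CpCp p\<^esub> commutator (CpCp p) cp_b \<gamma>
         = b_word e \<otimes>\<^bsub>CpCp p\<^esub> core_word p w ((f + e) mod p) \<otimes>\<^bsub>CpCp p\<^esub> inv\<^bsub>CpCp p\<^esub> b_word e"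
proof -
  interpret G: group "CpCp p" using CpCp_group[OF p] .
  have b: "cp_b \<in> carrier (CpCp p)" using p by (simp add: cp_b_def syllable_def)
  define P where "P = cp_b [^]\<^bsub>CpCp p\<^esub> e"
  define Q where "Q = cp_b [^]\<^bsub>CpCp p\<^esub> f"
  have "Q \<otimes>\<^bsub>CpCp p\<^esub> P = cp_b [^]\<^bsub>CpCp p\<^esub> (f + e)"
    unfolding P_def Q_def by (rule G.nat_pow_mult[OF b])
  then have PQ: "P = b_word e" "Q = b_word f" "Q \<otimes>\<^bsub>CpCp p\<^esub> P = b_word ((f + e) mod p)"
    using b_pow[OF p] \<gamma>(3,4) by (simp_all add: P_def Q_def)
  have carr: "P \<in> carrier (CpCp p)" "Q \<in> carrier (CpCp p)"
    unfolding P_def Q_def using G.nat_pow_closed[OF b] by blast+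
  have red: "cp_reduced p ((b_word e @ w) @ b_word f)" using \<gamma>(1,2) by simp
  then have red_ew: "cp_reduced p (b_word e @ w)" using reduced_append by blast
  have "\<gamma> = P \<otimes>\<^bsub>CpCp p\<^esub> w \<otimes>\<^bsub>CpCp p\<^esub> Q"
    using mult_concat[OF red] mult_concat[OF red_ew] \<gamma>(1) PQ by simp
  moreover have "cp_b \<otimes>\<^bsub>CpCp p\<^esub> P = P \<otimes>\<^bsub>CpCp p\<^esub> cp_b" "cp_b \<otimes>\<^bsub>CpCp p\<^esub> Q = Q \<otimes>\<^bsub>CpCp p\<^esub> cp_b"
    unfolding P_def Q_def using G.nat_pow_comm[OF b, of 1] G.nat_pow_eone[OF b] by metis+
  ultimately show ?thesis
    using G.commutator_conj_form[OF b w(1)[folded CpCp_simps(1)] carr]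
      core_word_product(2)[OF p w] carr PQ p by simp
qed

text \<open>For odd p no nonempty reduced word is its own inverse: the middle syllable (odd length)
  would satisfy k = p - k, while two middle syllables (even length) would share a letter.\<close>
lemma inv_word_not_self:
  assumes r: "cp_reduced p w" and ne: "w \<noteq> []" and odd: "odd p"
  shows "inv_word p w \<noteq> w"
proof
  assume eq: "inv_word p w = w"
  define k where "k = length w"
  have mirror: "w ! j = inv_syllable p (w ! (k - Suc j))" if "j < k" for j
  proof -
    have "inv_word p w ! j = inv_syllable p (w ! (k - Suc j))"
      using that unfolding inv_word_def k_def by (simp add: rev_nth)
    then show ?thesis using eq by simp
  qed
  define i where "i = (k - 1) div 2"
  have "0 < k" using ne k_def by simp
  show False
  proof (cases "odd k")
    case True
    then have "k - Suc i = i" "i < k" unfolding i_def using \<open>0 < k\<close> by (auto elim!: oddE)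
    then have "snd (w ! i) = p - snd (w ! i)" using mirror by (metis inv_syllable_def snd_conv)
    moreover have "snd (w ! i) < p" using r \<open>i < k\<close> k_def by (auto simp: reduced_iff syllable_def)
    ultimately have "p = 2 * snd (w ! i)" by linarith
    then show False using odd by simp
  next
    case False
    then have "k - Suc i = Suc i" "Suc i < k" unfolding i_def using \<open>0 < k\<close> by presburger+
    then have "fst (w ! i) = fst (w ! Suc i)" using mirror[of i] by (simp add: inv_syllable_def)
    moreover have "fst (w ! i) \<noteq> fst (w ! Suc i)"
      using successively_nth[of _ w i] r \<open>Suc i < k\<close> k_def by (auto simp: reduced_iff)
    ultimately show False by simp
  qed
qed

text \<open>If c \<noteq> 0, its first letter is
  a and its last is b, whereas u s u\<inverse> begins and ends with the same letter.  If c = 0, both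
  L and L\<inverse> begin with u, which is at least as long as w; comparing prefixes gives w = w\<inverse>.\<close>
lemma core_word_not_symmetric:
  assumes p: "1 < p" "odd p" and w: "cp_reduced p w" "w \<noteq> []" "\<not> fst (hd w)" "\<not> fst (last w)"
    and c: "c < p"
  shows "core_word p w c \<noteq> u @ [s] @ inv_word p u"
proof
  let ?W = "inv_word p w"
  assume L: "core_word p w c = u @ [s] @ inv_word p u"
  show False
  proof (cases "c = 0")
    case False
    have "u \<noteq> []" using L w(2) by (auto simp: core_word_def)
    then have "fst (hd (core_word p w c)) = fst (last (core_word p w c))"
      unfolding L by (simp add: inv_word_ends inv_syllable_def)
    then show False using False w(2,3) by (simp add: core_word_def b_word_def)
  next
    case True
    then have L0: "core_word p w c = w @ [(True, p - 1)] @ ?W @ [(True, 1)] @ w"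
      by (simp add: core_word_def b_word_def)
    have "cp_reduced p u"
      using core_word_product(1)[OF p(1) w c] L by (simp add: reduced_append)
    then have "inv_word p (core_word p w c) = u @ [inv_syllable p s] @ inv_word p u"
      unfolding L by (simp add: inv_word_inv_word)
    moreover have "inv_word p (core_word p w c) = ?W @ [(True, p - 1)] @ w @ [(True, 1)] @ ?W"
      unfolding L0 using inv_word_inv_word[OF w(1)] p(1) by (simp add: inv_syllable_def)
    moreover have "length w \<le> length u"
      using arg_cong[OF L0, of length] L by (simp add: inv_word_def)
    ultimately have "take (length w) u = ?W"
      by (metis append_eq_append_conv_if length_map length_rev inv_word_def take_all_iff)
    moreover have "take (length w) u = w"
      using L L0 \<open>length w \<le> length u\<close> by (metis append_eq_append_conv_if)
    ultimately show False using inv_word_not_self[OF w(1,2) p(2)] by simp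
  qed
qed

theorem mainTheorem14:
  fixes p :: nat and \<gamma> :: "(bool \<times> nat) list"
  assumes "Factorial_Ring.prime p" and "odd p"
    and "\<gamma> \<in> carrier (CpCp p)"
    and "\<gamma> \<noteq> \<one>\<^bsub>CpCp p\<^esub>"
    and "\<not> (\<exists>n::int. \<gamma> = cp_b [^]\<^bsub>CpCp p\<^esub> n)"
  shows "\<forall>n::nat. n > 0 \<longrightarrow>
           (\<gamma> \<otimes>\<^bsub>CpCp p\<^esub> commutator (CpCp p) cp_b \<gamma>) [^]\<^bsub>CpCp p\<^esub> n \<noteq> \<one>\<^bsub>CpCp p\<^esub>"
proof (intro allI impI)
  fix n :: nat
  assume n: "n > 0"
  have p: "1 < p" using assms(1) prime_gt_1_nat by blast
  interpret G: group "CpCp p" using CpCp_group[OF p] .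
  have \<gamma>: "cp_reduced p \<gamma>" "\<gamma> \<noteq> []" using assms(3,4) by simp_all
  then obtain e w f where dec: "\<gamma> = b_word e @ w @ b_word f" "e < p" "f < p"
    and w: "cp_reduced p w" "w \<noteq> []" "\<not> fst (hd w)" "\<not> fst (last w)"
    using a_core_decomposition[OF p _ _ assms(5)] by blast
  define L where "L = core_word p w ((f + e) mod p)"
  have c: "(f + e) mod p < p" using p by simp
  have L_carr: "L \<in> carrier (CpCp p)" "L \<noteq> []"
    using core_word_product(1)[OF p w c] w(2) by (simp_all add: L_def core_word_def)
  have P_carr: "b_word e \<in> carrier (CpCp p)" using dec(2) by (simp add: b_word_def syllable_def)
  show "(\<gamma> \<otimes>\<^bsub>CpCp p\<^esub> commutator (CpCp p) cp_b \<gamma>) [^]\<^bsub>CpCp p\<^esub> n \<noteq> \<one>\<^bsub>CpCp p\<^esub>"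
  proof
    assume "(\<gamma> \<otimes>\<^bsub>CpCp p\<^esub> commutator (CpCp p) cp_b \<gamma>) [^]\<^bsub>CpCp p\<^esub> n = \<one>\<^bsub>CpCp p\<^esub>"
    then have "L [^]\<^bsub>CpCp p\<^esub> n = []"
      using commutator_conj_core_word[OF p dec(1) \<gamma>(1) dec(2,3) w]
        G.conj_pow_eq_one_iff[OF P_carr L_carr(1)] by (simp add: L_def)
    then obtain u s where "L = u @ [s] @ inv_word p u"
      using torsion_word_symmetric[OF p n] L_carr by (metis CpCp_simps(1))
    then show False using core_word_not_symmetric[OF p assms(2) w c] unfolding L_def by blast
  qed
qed

end
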